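(* Let $n>1$, $a\in\mathcal{T}_n$, and consider the semigroup $(\mathcal{T}_n,*_a)$. Let $x\in\mathcal{T}_n$. If $\operatorname{rank}(x)\le\operatorname{rank}(a)$ and $|\operatorname{ran}(x)\cap M|\le1$ for every block $M$ of $\rho_a$, then $$R_x=\{y\in\mathcal{T}_n : \rho_y=\rho_x \text{ and } |\operatorname{ran}(y)\cap M|\le1 \text{ for every block } M \text{ of } \rho_a\}$$ and $|R_x|>1$. Otherwise $R_x=\{x\}$.
   Context: $\mathcal{T}_n$ is the set of all maps $N\to N$, $N=\{1,\dots,n\}$. Maps are composed from left to right: $(xy)(i)=y(x(i))$. For fixed $a\in\mathcal{T}_n$, $x*_a y:=xay$; $(\mathcal{T}_n,*_a)$ is a semigroup. $\operatorname{ran}(x)$ is the image of $x$, $\operatorname{rank}(x)=|\operatorname{ran}(x)|$, and $\rho_x$ is the partition of $N$ into the nonempty fibres of $x$ ($i,j$ in the same block iff $x(i)=x(j)$). Green's relations in a semigroup $S$: with $S^1$ the semigroup $S$ with an identity adjoined, $x\mathcal{L}y$ iff $S^1x=S^1y$, $x\mathcal{R}y$ iff $xS^1=yS^1$, $\mathcal{H}=\mathcal{L}\cap\mathcal{R}$, $\mathcal{D}=\mathcal{L}\circ\mathcal{R}$ (which equals $\mathcal{R}\circ\mathcal{L}$); $L_x,R_x,H_x,D_x$ denote the classes of $x$ in $(\mathcal{T}_n,*_a)$. *)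

theory Defs
  imports "HOL-Library.FuncSet"
begin

text \<open>Full transformation monoid T_n: maps {1..n} -> {1..n}, represented
  extensionally (value undefined outside {1..n}).\<close>
definition Tn :: "nat \<Rightarrow> (nat \<Rightarrow> nat) set" where
  "Tn n = {1..n} \<rightarrow>\<^sub>E {1..n}"

text \<open>Left-to-right composition: (x y)(i) = y (x i). Sandwich product x *_a y = x a y.\<close>
definition sand :: "nat \<Rightarrow> (nat \<Rightarrow> nat) \<Rightarrow> (nat \<Rightarrow> nat) \<Rightarrow> (nat \<Rightarrow> nat) \<Rightarrow> (nat \<Rightarrow> nat)" where
  "sand n a x y = restrict (\<lambda>i. y (a (x i))) {1..n}"

definition ran :: "nat \<Rightarrow> (nat \<Rightarrow> nat) \<Rightarrow> nat set" where
  "ran n x = x ` {1..n}"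

definition rank :: "nat \<Rightarrow> (nat \<Rightarrow> nat) \<Rightarrow> nat" where
  "rank n x = card (ran n x)"

definition rho :: "nat \<Rightarrow> (nat \<Rightarrow> nat) \<Rightarrow> nat set set" where
  "rho n x = {{j \<in> {1..n}. x j = x i} | i. i \<in> {1..n}}"

text \<open>Principal right ideal x S^1 in (T_n, *_a).\<close>
definition right_ideal :: "nat \<Rightarrow> (nat \<Rightarrow> nat) \<Rightarrow> (nat \<Rightarrow> nat) \<Rightarrow> (nat \<Rightarrow> nat) set" where
  "right_ideal n a x = insert x {sand n a x z | z. z \<in> Tn n}"

definition R_class :: "nat \<Rightarrow> (nat \<Rightarrow> nat) \<Rightarrow> (nat \<Rightarrow> nat) \<Rightarrow> (nat \<Rightarrow> nat) set" where
  "R_class n a x = {y \<in> Tn n. right_ideal n a y = right_ideal n a x}"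

end

theory Submission
  imports Defs "HOL-Combinatorics.Transposition"
begin

text \<open>In \<open>(T\<^sub>n, *\<^sub>a)\<close> the right ideal \<open>x S\<close> consists of the maps \<open>x a z\<close>, that is, of the
  maps factoring through \<open>x a\<close>, which are exactly those whose kernel contains that of \<open>x a\<close>.
  (With composition written left to right, \<open>x a\<close> is \<open>a \<circ> x\<close> below.)
  So \<open>y R x\<close> with \<open>y \<noteq> x\<close> means \<open>ker (x a) \<subseteq> ker y\<close> and \<open>ker (y a) \<subseteq> ker x\<close>. As every
  kernel is contained in that of its composite with \<open>a\<close>, these inclusions close up into a
  cycle: \<open>x\<close> and \<open>y\<close> have the same kernel and \<open>a\<close> is injective on both ranges. Injectivity of
  \<open>a\<close> on \<open>ran x\<close> is the block condition, and it already forces \<open>rank x \<le> rank a\<close>. When it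
  holds, following \<open>x\<close> by a transposition of \<open>{1..n}\<close> gives a second element of \<open>R\<^sub>x\<close>.\<close>

lemma Tn_apply: "f \<in> Tn n \<Longrightarrow> i \<in> {1..n} \<Longrightarrow> f i \<in> {1..n}"
  unfolding Tn_def by auto

lemma Tn_ran_subset: "f \<in> Tn n \<Longrightarrow> ran n f \<subseteq> {1..n}"
  unfolding Tn_def ran_def by auto

lemma finite_Tn: "finite (Tn n)"
  unfolding Tn_def by (simp add: finite_PiE)

lemma sand_in_Tn: "a \<in> Tn n \<Longrightarrow> x \<in> Tn n \<Longrightarrow> z \<in> Tn n \<Longrightarrow> sand n a x z \<in> Tn n"
  unfolding sand_def Tn_def by auto

lemma sand_assoc:
  assumes "a \<in> Tn n" "x \<in> Tn n"
  shows "sand n a (sand n a x u) z = sand n a x (sand n a u z)"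
proof -
  have "a (x i) \<in> {1..n}" if "i \<in> {1..n}" for i
    using Tn_apply[OF assms(1) Tn_apply[OF assms(2) that]] .
  then show ?thesis by (simp add: sand_def fun_eq_iff)
qed

definition ker :: "nat \<Rightarrow> (nat \<Rightarrow> 'a) \<Rightarrow> (nat \<times> nat) set" where
  "ker n f = {(i, j). i \<in> {1..n} \<and> j \<in> {1..n} \<and> f i = f j}"

lemma equiv_ker: "equiv {1..n} (ker n f)"
  unfolding ker_def by (rule equivI) (auto simp: refl_on_def sym_def trans_def)

lemma ker_subset_ker_comp: "ker n f \<subseteq> ker n (g \<circ> f)"
  unfolding ker_def by auto

lemma ker_comp_eq_iff_inj_on: "ker n (g \<circ> f) = ker n f \<longleftrightarrow> inj_on g (ran n f)"
  unfolding ker_def ran_def inj_on_def by fastforce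

lemma rel_eq_Union_quotient:
  assumes "equiv A r" shows "r = (\<Union>X \<in> A // r. X \<times> X)"
proof
  show "r \<subseteq> (\<Union>X \<in> A // r. X \<times> X)"
  proof (rule subrelI)
    fix i j assume "(i, j) \<in> r"
    with assms have "i \<in> A" by (auto dest: equiv_type)
    then have "r `` {i} \<in> A // r" by (rule quotientI)
    moreover have "i \<in> r `` {i}" using assms \<open>i \<in> A\<close> by (rule equiv_class_self)
    moreover have "j \<in> r `` {i}" using \<open>(i, j) \<in> r\<close> by blast
    ultimately show "(i, j) \<in> (\<Union>X \<in> A // r. X \<times> X)" by blast
  qed
qed (use assms in \<open>auto dest: in_quotient_imp_in_rel\<close>)

lemma rho_eq_quotient_ker: "rho n f = {1..n} // ker n f"
proof -
  have classes: "ker n f `` {i} = {j \<in> {1..n}. f j = f i}" if "i \<in> {1..n}" for i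
    using that unfolding ker_def by auto
  have "rho n f = (\<lambda>i. {j \<in> {1..n}. f j = f i}) ` {1..n}"
    unfolding rho_def by blast
  also have "\<dots> = (\<lambda>i. ker n f `` {i}) ` {1..n}"
    using classes by (rule image_cong[OF refl, symmetric])
  finally show ?thesis by (auto simp: quotient_def)
qed

lemma rho_eq_iff_ker_eq: "rho n f = rho n g \<longleftrightarrow> ker n f = ker n g"
  by (metis rho_eq_quotient_ker rel_eq_Union_quotient equiv_ker)

lemma card_inter_blocks_le_1_iff_inj_on:
  assumes "S \<subseteq> {1..n}"
  shows "(\<forall>M \<in> rho n a. card (S \<inter> M) \<le> 1) \<longleftrightarrow> inj_on a S"
proof
  assume blocks: "\<forall>M \<in> rho n a. card (S \<inter> M) \<le> 1"
  show "inj_on a S"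
  proof (rule inj_onI)
    fix p q assume "p \<in> S" "q \<in> S" "a p = a q"
    let ?M = "{j \<in> {1..n}. a j = a p}"
    have "?M \<in> rho n a" using \<open>p \<in> S\<close> assms unfolding rho_def by blast
    with blocks have "card (S \<inter> ?M) \<le> Suc 0" by simp
    moreover have "finite (S \<inter> ?M)" by (rule finite_subset[of _ "{1..n}"]) auto
    moreover have "p \<in> S \<inter> ?M" "q \<in> S \<inter> ?M"
      using \<open>p \<in> S\<close> \<open>q \<in> S\<close> \<open>a p = a q\<close> assms by auto
    ultimately show "p = q" using card_le_Suc0_iff_eq[of "S \<inter> ?M"] by blast
  qed
next
  assume inj: "inj_on a S"
  show "\<forall>M \<in> rho n a. card (S \<inter> M) \<le> 1"
  proof
    fix M assume "M \<in> rho n a"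
    then obtain i where M: "M = {j \<in> {1..n}. a j = a i}" unfolding rho_def by blast
    have fin: "finite (S \<inter> M)" unfolding M by (rule finite_subset[of _ "{1..n}"]) auto
    have "\<forall>p \<in> S \<inter> M. \<forall>q \<in> S \<inter> M. p = q"
    proof (intro ballI)
      fix p q assume "p \<in> S \<inter> M" "q \<in> S \<inter> M"
      then have "a p = a q" unfolding M by simp
      then show "p = q" using inj_onD[OF inj] \<open>p \<in> S \<inter> M\<close> \<open>q \<in> S \<inter> M\<close> by blast
    qed
    then show "card (S \<inter> M) \<le> 1" using card_le_Suc0_iff_eq[OF fin] by simp
  qed
qed

lemma rank_le_rank_if_inj_on:
  assumes "x \<in> Tn n" "inj_on a (ran n x)"
  shows "rank n x \<le> rank n a"
proof -
  have "rank n x = card (a ` ran n x)"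
    using assms(2) by (simp add: rank_def card_image)
  also have "\<dots> \<le> card (a ` {1..n})"
    using Tn_ran_subset[OF assms(1)] by (intro card_mono) auto
  finally show ?thesis by (simp add: rank_def ran_def)
qed

lemma factors_through_iff_ker_subset:
  assumes f: "f ` {1..n} \<subseteq> {1..n}" and w: "w \<in> Tn n"
  shows "(\<exists>z \<in> Tn n. w = restrict (z \<circ> f) {1..n}) \<longleftrightarrow> ker n f \<subseteq> ker n w"
proof
  assume "\<exists>z \<in> Tn n. w = restrict (z \<circ> f) {1..n}"
  then show "ker n f \<subseteq> ker n w" by (auto simp: ker_def)
next
  assume ker_le: "ker n f \<subseteq> ker n w"
  define z where
    "z = restrict (\<lambda>t. if t \<in> f ` {1..n} then w (inv_into {1..n} f t) else t) {1..n}"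
  have "w (inv_into {1..n} f t) \<in> {1..n}" if "t \<in> f ` {1..n}" for t
    using Tn_apply[OF w inv_into_into[OF that]] .
  then have "z \<in> Tn n"
    unfolding z_def Tn_def restrict_PiE_iff by (simp del: atLeastAtMost_iff)
  moreover have "w = restrict (z \<circ> f) {1..n}"
  proof
    fix i
    show "w i = restrict (z \<circ> f) {1..n} i"
    proof (cases "i \<in> {1..n}")
      case True
      define j where "j = inv_into {1..n} f (f i)"
      have fi: "f i \<in> f ` {1..n}" using True by blast
      have "j \<in> {1..n}" unfolding j_def by (rule inv_into_into[OF fi])
      moreover have "f j = f i" unfolding j_def by (rule f_inv_into_f[OF fi])
      ultimately have "(i, j) \<in> ker n f" using True unfolding ker_def by simp
      with ker_le have "w i = w j" unfolding ker_def by blast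
      moreover have "z (f i) = w j" using f True fi unfolding z_def j_def by (auto simp del: atLeastAtMost_iff)
      ultimately show ?thesis using True by simp
    next
      case False
      show ?thesis
        unfolding restrict_apply if_not_P[OF False] by (rule PiE_arb[OF w[unfolded Tn_def] False])
    qed
  qed
  ultimately show "\<exists>z \<in> Tn n. w = restrict (z \<circ> f) {1..n}" by blast
qed

lemma in_right_ideal_iff:
  assumes "a \<in> Tn n" "x \<in> Tn n" "w \<in> Tn n"
  shows "w \<in> right_ideal n a x \<longleftrightarrow> w = x \<or> ker n (a \<circ> x) \<subseteq> ker n w"
proof -
  have "(a \<circ> x) ` {1..n} \<subseteq> {1..n}"
    unfolding comp_def using Tn_apply[OF assms(1)] Tn_apply[OF assms(2)] by blast
  moreover have "sand n a x z = restrict (z \<circ> (a \<circ> x)) {1..n}" for z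
    by (simp add: sand_def comp_def)
  then have "w \<in> right_ideal n a x \<longleftrightarrow> w = x \<or> (\<exists>z \<in> Tn n. w = restrict (z \<circ> (a \<circ> x)) {1..n})"
    unfolding right_ideal_def by auto
  ultimately show ?thesis
    using factors_through_iff_ker_subset[OF _ assms(3)] by blast
qed

lemma right_ideal_subset_iff:
  assumes a: "a \<in> Tn n" and x: "x \<in> Tn n"
  shows "right_ideal n a y \<subseteq> right_ideal n a x \<longleftrightarrow> y \<in> right_ideal n a x"
proof
  assume "y \<in> right_ideal n a x"
  then consider "y = x" | u where "u \<in> Tn n" "y = sand n a x u"
    unfolding right_ideal_def by blast
  then show "right_ideal n a y \<subseteq> right_ideal n a x"
  proof cases
    case 2
    have "sand n a y z \<in> right_ideal n a x" if "z \<in> Tn n" for z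
      using sand_assoc[OF a x] sand_in_Tn[OF a \<open>u \<in> Tn n\<close> that]
      unfolding \<open>y = sand n a x u\<close> right_ideal_def by blast
    then show ?thesis
      using \<open>y \<in> right_ideal n a x\<close> unfolding right_ideal_def by blast
  qed blast
next
  show "y \<in> right_ideal n a x" if "right_ideal n a y \<subseteq> right_ideal n a x"
    using that unfolding right_ideal_def by blast
qed

lemma R_class_iff:
  assumes a: "a \<in> Tn n" and x: "x \<in> Tn n"
  shows "y \<in> R_class n a x \<longleftrightarrow>
    y \<in> Tn n \<and> (y = x \<or> ker n (a \<circ> x) \<subseteq> ker n y \<and> ker n (a \<circ> y) \<subseteq> ker n x)"
proof -
  have "y \<in> R_class n a x \<longleftrightarrow>
      y \<in> Tn n \<and> y \<in> right_ideal n a x \<and> x \<in> right_ideal n a y"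
  proof (cases "y \<in> Tn n")
    case True
    then show ?thesis
      unfolding R_class_def set_eq_subset
      using right_ideal_subset_iff[OF a x] right_ideal_subset_iff[OF a True] by blast
  qed (simp add: R_class_def)
  then show ?thesis
    using in_right_ideal_iff[OF a x] in_right_ideal_iff[OF a _ x] by auto
qed

lemma ker_comp_subset_cross_iff:
  "ker n (g \<circ> x) \<subseteq> ker n y \<and> ker n (g \<circ> y) \<subseteq> ker n x \<longleftrightarrow>
    ker n y = ker n x \<and> inj_on g (ran n x) \<and> inj_on g (ran n y)"
  unfolding ker_comp_eq_iff_inj_on[symmetric]
  using ker_subset_ker_comp[of n x g] ker_subset_ker_comp[of n y g] by blast

lemma R_class_eq:
  assumes "a \<in> Tn n" "x \<in> Tn n"
  shows "R_class n a x = (if inj_on a (ran n x)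
    then {y \<in> Tn n. ker n y = ker n x \<and> inj_on a (ran n y)} else {x})"
proof (rule set_eqI)
  fix y
  show "y \<in> R_class n a x \<longleftrightarrow> y \<in> (if inj_on a (ran n x)
    then {y \<in> Tn n. ker n y = ker n x \<and> inj_on a (ran n y)} else {x})"
    unfolding R_class_iff[OF assms] ker_comp_subset_cross_iff using assms(2) by auto
qed

lemma ran_restrict_comp: "ran n (restrict (g \<circ> f) {1..n}) = g ` ran n f"
  unfolding ran_def by (simp add: image_comp)

lemma obtain_other_with_same_ker:
  assumes n: "1 < n" and x: "x \<in> Tn n" and inj: "inj_on a (ran n x)"
  obtains y where "y \<in> Tn n" "y \<noteq> x" "ker n y = ker n x" "inj_on a (ran n y)"
proof -
  have one: "1 \<in> {1..n}" using n by simp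
  then have x1: "x 1 \<in> ran n x" "x 1 \<in> {1..n}"
    unfolding ran_def using Tn_apply[OF x] by auto
  \<comment> \<open>Either \<open>d\<close> is a value of \<open>x\<close>, and swapping \<open>x 1\<close> with it permutes \<open>ran x\<close>, or \<open>x\<close> is
    constant and the swap moves \<open>ran x\<close> to the singleton \<open>{d}\<close>.\<close>
  obtain d where d: "d \<in> {1..n}" "d \<noteq> x 1" and d_ran: "d \<in> ran n x \<or> ran n x = {x 1}"
  proof (cases "ran n x = {x 1}")
    case True
    define d :: nat where "d = (if x 1 = 1 then 2 else 1)"
    have "d \<in> {1..n}" "d \<noteq> x 1" using n unfolding d_def by auto
    with True show ?thesis using that by blast
  next
    case False
    with x1 obtain d where "d \<in> ran n x" "d \<noteq> x 1" by blast
    with Tn_ran_subset[OF x] show ?thesis using that by blast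
  qed
  define y where "y = restrict (transpose (x 1) d \<circ> x) {1..n}"
  have "transpose (x 1) d ` {1..n} = {1..n}"
    using d x1 by simp
  then have "y \<in> Tn n"
    using Tn_apply[OF x] unfolding y_def Tn_def by (auto simp del: atLeastAtMost_iff)
  moreover have "y \<noteq> x"
    using one d unfolding y_def by (metis comp_apply restrict_apply' transpose_apply_first)
  moreover have "ker n y = ker n x"
    unfolding ker_def y_def by (auto simp: inj_eq[OF inj_transpose])
  moreover have "inj_on a (ran n y)"
    using d_ran
  proof
    assume "d \<in> ran n x"
    with x1 have "ran n y = ran n x" unfolding y_def ran_restrict_comp by simp
    with inj show ?thesis by simp
  next
    assume "ran n x = {x 1}"
    then have "ran n y = {d}" unfolding y_def ran_restrict_comp by simp
    then show ?thesis by simp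
  qed
  ultimately show ?thesis using that by blast
qed

theorem theorem6:
  fixes n :: nat and a x :: "nat \<Rightarrow> nat"
  assumes "n > 1" and "a \<in> Tn n" and "x \<in> Tn n"
  shows "(rank n x \<le> rank n a \<and> (\<forall>M \<in> rho n a. card (ran n x \<inter> M) \<le> 1)
           \<longrightarrow> R_class n a x = {y \<in> Tn n. rho n y = rho n x \<and>
                                   (\<forall>M \<in> rho n a. card (ran n y \<inter> M) \<le> 1)}
               \<and> card (R_class n a x) > 1)
       \<and> (\<not> (rank n x \<le> rank n a \<and> (\<forall>M \<in> rho n a. card (ran n x \<inter> M) \<le> 1))
           \<longrightarrow> R_class n a x = {x})"
proof -
  note a = assms(2) and x = assms(3)
  have blocks: "(\<forall>M \<in> rho n a. card (ran n f \<inter> M) \<le> 1) \<longleftrightarrow> inj_on a (ran n f)"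
    if "f \<in> Tn n" for f
    using card_inter_blocks_le_1_iff_inj_on[OF Tn_ran_subset[OF that]] .
  have condition: "rank n x \<le> rank n a \<and> (\<forall>M \<in> rho n a. card (ran n x \<inter> M) \<le> 1) \<longleftrightarrow>
      inj_on a (ran n x)"
    using blocks[OF x] rank_le_rank_if_inj_on[OF x] by blast
  show ?thesis
  proof (cases "inj_on a (ran n x)")
    case True
    then have R: "R_class n a x = {y \<in> Tn n. ker n y = ker n x \<and> inj_on a (ran n y)}"
      using R_class_eq[OF a x] by simp
    obtain y where "y \<in> Tn n" "y \<noteq> x" "ker n y = ker n x" "inj_on a (ran n y)"
      using obtain_other_with_same_ker[OF assms(1) x True] .
    with R x True have "card {x, y} \<le> card (R_class n a x)"
      by (intro card_mono finite_subset[OF _ finite_Tn]) auto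
    with \<open>y \<noteq> x\<close> have "card (R_class n a x) > 1" by simp
    moreover have "R_class n a x = {y \<in> Tn n. rho n y = rho n x \<and>
        (\<forall>M \<in> rho n a. card (ran n y \<inter> M) \<le> 1)}"
      unfolding R rho_eq_iff_ker_eq using blocks by blast
    ultimately show ?thesis using condition True by simp
  next
    case False
    then show ?thesis using condition R_class_eq[OF a x] by simp
  qed
qed

end
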